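(* The Petersen graph is uniformly vertex-transitive but is not a Cayley graph.
   Context: The Petersen graph has as vertices the $2$-element subsets of $\{1,2,3,4,5\}$, two being adjacent iff they are disjoint. A permutation $\sigma$ of $V(\Gamma)$ is identified with its permutation matrix (the $(u,v)$ entry is $1$ iff $\sigma(u)=v$); $J_n$ is the $n\times n$ all-ones matrix. A graph $\Gamma$ on $n$ vertices is uniformly vertex-transitive if there is a set of $n$ distinct automorphisms $\{\sigma_1,\ldots,\sigma_n\}\subset\operatorname{Aut}(\Gamma)$ with $\sum_i\sigma_i=J_n$. A Cayley graph $C(G,S)$, for a finite group $G$ and subset $S\subset G$, has vertex set $G$, with $a,b$ adjacent iff $a=sb$ or $b=sa$ for some $s\in S$; a graph is Cayley if it is isomorphic to some $C(G,S)$. *)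

theory Defs
  imports "HOL-Algebra.Group" "HOL-Combinatorics.Permutations"
begin

definition petersen_V :: "nat set set" where
  "petersen_V = {A. A \<subseteq> {1..5} \<and> card A = 2}"

definition petersen_adj :: "nat set \<Rightarrow> nat set \<Rightarrow> bool" where
  "petersen_adj A B \<longleftrightarrow> A \<inter> B = {}"

definition is_automorphism :: "'a set \<Rightarrow> ('a \<Rightarrow> 'a \<Rightarrow> bool) \<Rightarrow> ('a \<Rightarrow> 'a) \<Rightarrow> bool" where
  "is_automorphism V adj \<sigma> \<longleftrightarrow>
     \<sigma> permutes V \<and> (\<forall>u\<in>V. \<forall>v\<in>V. adj u v \<longleftrightarrow> adj (\<sigma> u) (\<sigma> v))"

definition perm_matrix :: "('a \<Rightarrow> 'a) \<Rightarrow> 'a \<Rightarrow> 'a \<Rightarrow> int" where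
  "perm_matrix \<sigma> u v = (if \<sigma> u = v then 1 else 0)"

definition uniformly_vertex_transitive :: "'a set \<Rightarrow> ('a \<Rightarrow> 'a \<Rightarrow> bool) \<Rightarrow> bool" where
  "uniformly_vertex_transitive V adj \<longleftrightarrow>
     (\<exists>\<Sigma>. (\<forall>\<sigma>\<in>\<Sigma>. is_automorphism V adj \<sigma>) \<and> card \<Sigma> = card V \<and>
          (\<forall>u\<in>V. \<forall>v\<in>V. (\<Sum>\<sigma>\<in>\<Sigma>. perm_matrix \<sigma> u v) = 1))"

definition cayley_adj :: "('g, 'b) monoid_scheme \<Rightarrow> 'g set \<Rightarrow> 'g \<Rightarrow> 'g \<Rightarrow> bool" where
  "cayley_adj G S a b \<longleftrightarrow> (\<exists>s\<in>S. a = s \<otimes>\<^bsub>G\<^esub> b \<or> b = s \<otimes>\<^bsub>G\<^esub> a)"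

definition graph_iso :: "'a set \<Rightarrow> ('a \<Rightarrow> 'a \<Rightarrow> bool) \<Rightarrow> 'b set \<Rightarrow> ('b \<Rightarrow> 'b \<Rightarrow> bool) \<Rightarrow> bool" where
  "graph_iso V adj W adj' \<longleftrightarrow>
     (\<exists>f. bij_betw f V W \<and> (\<forall>u\<in>V. \<forall>v\<in>V. adj u v \<longleftrightarrow> adj' (f u) (f v)))"

end

theory Submission
  imports Defs "HOL-Library.Z2" "HOL-Library.Disjoint_Sets" "HOL-Number_Theory.Cong"
begin

text \<open>
  The ten maps \<open>x \<mapsto> a x + b\<close> of \<open>\<int>/5\<close> with \<open>a \<in> {1, 2}\<close> send any given pair to each pair
  exactly once; acting on the \<open>2\<close>-subsets they witness uniform vertex-transitivity.

  The Petersen graph is cubic, of diameter two and without quadrilaterals. In a Cayley graph the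
  neighbourhood of the identity is closed under inversion, so odd degree forces an involution \<open>t\<close>
  among the neighbours of \<open>1\<close>. Right translations are automorphisms; if some \<open>x\<close> were not
  adjacent to \<open>x t\<close>, a common neighbour \<open>c\<close> of the two would give the quadrilateral
  \<open>x, c, x t, c t\<close>. Hence \<open>x \<sim> x t\<close> for all \<open>x\<close>, and for any other neighbour \<open>y\<close> of \<open>1\<close> the
  vertices \<open>1, y, y t, t\<close> form a quadrilateral.
\<close>

text \<open>The map \<open>y \<mapsto> a y + b + 1\<close> of \<open>\<int>/n\<close>, with residues represented by \<open>1, \<dots>, n\<close>.\<close>

definition affine_mod :: "nat \<Rightarrow> nat \<Rightarrow> nat \<Rightarrow> nat \<Rightarrow> nat" where
  "affine_mod n a b x = (if x \<in> {1..n} then (a * x + b) mod n + 1 else x)"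

lemma cong_atLeastAtMost_modulus_unique:
  fixes x y n :: nat
  assumes "x \<in> {1..n}" "y \<in> {1..n}" "[x = y] (mod n)"
  shows "x = y"
proof -
  have "[x - 1 = y - 1] (mod n)"
    using assms by (simp add: cong_diff_nat)
  moreover have "x - 1 < n" "y - 1 < n"
    using assms(1,2) by auto
  ultimately have "x - 1 = y - 1"
    by (rule cong_less_modulus_unique_nat)
  then show ?thesis
    using assms(1,2) by auto
qed

lemma affine_mod_permutes:
  assumes "coprime a n"
  shows "affine_mod n a b permutes {1..n}"
proof (rule bij_imp_permutes)
  have "inj_on (affine_mod n a b) {1..n}"
  proof (rule inj_onI)
    fix x y assume x: "x \<in> {1..n}" and y: "y \<in> {1..n}"
      and "affine_mod n a b x = affine_mod n a b y"
    then have "[a * x + b = a * y + b] (mod n)"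
      by (simp add: affine_mod_def cong_def)
    then have "[x = y] (mod n)"
      using assms by (metis cong_add_rcancel_nat cong_mult_lcancel_nat)
    with x y show "x = y"
      by (rule cong_atLeastAtMost_modulus_unique)
  qed
  moreover have "affine_mod n a b ` {1..n} \<subseteq> {1..n}"
    by (auto simp: affine_mod_def Suc_le_eq)
  ultimately show "bij_betw (affine_mod n a b) {1..n} {1..n}"
    by (simp add: bij_betw_def endo_inj_surj)
qed (auto simp: affine_mod_def)

section \<open>Graph properties preserved by isomorphism\<close>

definition neighbours :: "'a set \<Rightarrow> ('a \<Rightarrow> 'a \<Rightarrow> bool) \<Rightarrow> 'a \<Rightarrow> 'a set" where
  "neighbours V adj v = {w \<in> V. adj v w}"

definition regular :: "'a set \<Rightarrow> ('a \<Rightarrow> 'a \<Rightarrow> bool) \<Rightarrow> nat \<Rightarrow> bool" where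
  "regular V adj k \<longleftrightarrow> (\<forall>v\<in>V. card (neighbours V adj v) = k)"

definition loopless :: "'a set \<Rightarrow> ('a \<Rightarrow> 'a \<Rightarrow> bool) \<Rightarrow> bool" where
  "loopless V adj \<longleftrightarrow> (\<forall>v\<in>V. \<not> adj v v)"

definition diameter_le_two :: "'a set \<Rightarrow> ('a \<Rightarrow> 'a \<Rightarrow> bool) \<Rightarrow> bool" where
  "diameter_le_two V adj \<longleftrightarrow>
     (\<forall>u\<in>V. \<forall>w\<in>V. u \<noteq> w \<longrightarrow> \<not> adj u w \<longrightarrow> (\<exists>c\<in>V. adj u c \<and> adj c w))"

definition quadrilateral_free :: "'a set \<Rightarrow> ('a \<Rightarrow> 'a \<Rightarrow> bool) \<Rightarrow> bool" where
  "quadrilateral_free V adj \<longleftrightarrow>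
     (\<forall>a\<in>V. \<forall>b\<in>V. \<forall>c\<in>V. \<forall>d\<in>V. a \<noteq> c \<longrightarrow> adj a b \<longrightarrow> adj b c \<longrightarrow> adj c d \<longrightarrow> adj d a \<longrightarrow> b = d)"

lemma diameter_le_twoE:
  assumes "diameter_le_two V adj" "u \<in> V" "w \<in> V" "u \<noteq> w" "\<not> adj u w"
  obtains c where "c \<in> V" "adj u c" "adj c w"
  using assms unfolding diameter_le_two_def by blast

lemma quadrilateral_freeD:
  assumes "quadrilateral_free V adj" "a \<in> V" "b \<in> V" "c \<in> V" "d \<in> V" "a \<noteq> c"
    and "adj a b" "adj b c" "adj c d" "adj d a"
  shows "b = d"
  using assms unfolding quadrilateral_free_def by blast

lemma graph_isoE:
  assumes "graph_iso V adj W adj'"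
  obtains f where "inj_on f V" "W = f ` V" "\<And>u v. u \<in> V \<Longrightarrow> v \<in> V \<Longrightarrow> adj' (f u) (f v) \<longleftrightarrow> adj u v"
  using assms unfolding graph_iso_def bij_betw_def by metis

lemma loopless_graph_iso:
  assumes "graph_iso V adj W adj'" "loopless V adj"
  shows "loopless W adj'"
proof (rule graph_isoE[OF assms(1)])
  fix f assume "W = f ` V" and adj': "\<And>u v. u \<in> V \<Longrightarrow> v \<in> V \<Longrightarrow> adj' (f u) (f v) \<longleftrightarrow> adj u v"
  then show ?thesis
    using assms(2) unfolding loopless_def by simp
qed

lemma diameter_le_two_graph_iso:
  assumes "graph_iso V adj W adj'" "diameter_le_two V adj"
  shows "diameter_le_two W adj'"
proof (rule graph_isoE[OF assms(1)])
  fix f assume "inj_on f V" "W = f ` V" and adj': "\<And>u v. u \<in> V \<Longrightarrow> v \<in> V \<Longrightarrow> adj' (f u) (f v) \<longleftrightarrow> adj u v"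
  then show ?thesis
    using assms(2) unfolding diameter_le_two_def by (simp add: adj' inj_on_eq_iff)
qed

lemma quadrilateral_free_graph_iso:
  assumes "graph_iso V adj W adj'" "quadrilateral_free V adj"
  shows "quadrilateral_free W adj'"
proof (rule graph_isoE[OF assms(1)])
  fix f assume inj: "inj_on f V" and W: "W = f ` V"
    and adj': "\<And>u v. u \<in> V \<Longrightarrow> v \<in> V \<Longrightarrow> adj' (f u) (f v) \<longleftrightarrow> adj u v"
  show ?thesis
    unfolding quadrilateral_free_def W ball_simps(9)
  proof (intro ballI impI)
    fix a b c d assume V: "a \<in> V" "b \<in> V" "c \<in> V" "d \<in> V" and "f a \<noteq> f c"
      and "adj' (f a) (f b)" "adj' (f b) (f c)" "adj' (f c) (f d)" "adj' (f d) (f a)"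
    then have "b = d"
      by (intro quadrilateral_freeD[OF assms(2) V]) (auto simp: adj')
    then show "f b = f d"
      by simp
  qed
qed

lemma regular_graph_iso:
  assumes "graph_iso V adj W adj'" "regular V adj k"
  shows "regular W adj' k"
proof (rule graph_isoE[OF assms(1)])
  fix f assume inj: "inj_on f V" and W: "W = f ` V"
    and adj': "\<And>u v. u \<in> V \<Longrightarrow> v \<in> V \<Longrightarrow> adj' (f u) (f v) \<longleftrightarrow> adj u v"
  have "neighbours W adj' (f v) = f ` neighbours V adj v" if "v \<in> V" for v
    using that by (auto simp: neighbours_def W adj')
  moreover have "card (f ` neighbours V adj v) = card (neighbours V adj v)" for v
    by (rule card_image, rule inj_on_subset[OF inj]) (auto simp: neighbours_def)
  ultimately show ?thesis
    using assms(2) by (simp add: regular_def W)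
qed

lemma uniformly_vertex_transitiveI:
  assumes "finite V" "V \<noteq> {}"
    and aut: "\<And>\<sigma>. \<sigma> \<in> \<Sigma> \<Longrightarrow> is_automorphism V adj \<sigma>"
    and sharp: "\<And>u. u \<in> V \<Longrightarrow> bij_betw (\<lambda>\<sigma>. \<sigma> u) \<Sigma> V"
  shows "uniformly_vertex_transitive V adj"
proof -
  obtain u0 where "u0 \<in> V"
    using \<open>V \<noteq> {}\<close> by blast
  with sharp have bij0: "bij_betw (\<lambda>\<sigma>. \<sigma> u0) \<Sigma> V"
    by blast
  then have fin: "finite \<Sigma>"
    using \<open>finite V\<close> bij_betw_finite by blast
  have "(\<Sum>\<sigma>\<in>\<Sigma>. perm_matrix \<sigma> u v) = 1" if u: "u \<in> V" and v: "v \<in> V" for u v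
  proof -
    obtain \<sigma>0 where \<sigma>0: "\<sigma>0 \<in> \<Sigma>" "\<sigma>0 u = v"
      using sharp[OF u] v by (metis bij_betw_imp_surj_on imageE)
    have "perm_matrix \<sigma> u v = (if \<sigma> = \<sigma>0 then 1 else 0)" if "\<sigma> \<in> \<Sigma>" for \<sigma>
      using that \<sigma>0 bij_betw_imp_inj_on[OF sharp[OF u]] by (auto simp: perm_matrix_def inj_on_def)
    then show ?thesis
      using fin \<sigma>0(1) by simp
  qed
  then show ?thesis
    unfolding uniformly_vertex_transitive_def using aut bij_betw_same_card[OF bij0] by blast
qed

section \<open>Cayley graphs\<close>

lemma even_card_if_fixpoint_free_involution:
  assumes "\<And>x. x \<in> X \<Longrightarrow> h x \<in> X" "\<And>x. x \<in> X \<Longrightarrow> h (h x) = x"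
    and "\<And>x. x \<in> X \<Longrightarrow> h x \<noteq> x"
  shows "even (card X)"
proof -
  have "(\<Sum>x\<in>X. 1 :: bit) = 0"
    by (rule sum_involution_eq_0[of X "\<lambda>_. 1" h]) (use assms in simp_all)
  then have "even (of_nat (card X) :: bit)"
    by simp
  then show ?thesis
    by (simp only: even_of_nat_iff)
qed

lemma cayley_adj_sym: "cayley_adj G S a b \<Longrightarrow> cayley_adj G S b a"
  unfolding cayley_adj_def by blast

context group
begin

lemma cayley_adj_mult_right:
  assumes "S \<subseteq> carrier G" "a \<in> carrier G" "b \<in> carrier G" "h \<in> carrier G" "cayley_adj G S a b"
  shows "cayley_adj G S (a \<otimes> h) (b \<otimes> h)"
proof -
  from assms(5) obtain s where s: "s \<in> S" "a = s \<otimes> b \<or> b = s \<otimes> a"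
    unfolding cayley_adj_def by blast
  with assms(1-4) have "a \<otimes> h = s \<otimes> (b \<otimes> h) \<or> b \<otimes> h = s \<otimes> (a \<otimes> h)"
    by (auto simp: m_assoc)
  with s(1) show ?thesis
    unfolding cayley_adj_def by blast
qed

lemma cayley_adj_one_inv:
  assumes "S \<subseteq> carrier G" "n \<in> carrier G" "cayley_adj G S \<one> n"
  shows "cayley_adj G S \<one> (inv n)"
proof -
  have "cayley_adj G S (\<one> \<otimes> inv n) (n \<otimes> inv n)"
    by (rule cayley_adj_mult_right) (use assms in auto)
  with assms(2) show ?thesis
    by (simp add: cayley_adj_sym)
qed

lemma cayley_odd_degree_involution:
  assumes "S \<subseteq> carrier G" "odd (card (neighbours (carrier G) (cayley_adj G S) \<one>))"
  obtains t where "t \<in> carrier G" "cayley_adj G S \<one> t" "inv t = t"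
proof -
  let ?N = "neighbours (carrier G) (cayley_adj G S) \<one>"
  have "\<exists>t\<in>?N. inv t = t"
  proof (rule ccontr)
    assume "\<not> ?thesis"
    then have "even (card ?N)"
      by (intro even_card_if_fixpoint_free_involution[where h = "\<lambda>x. inv x"])
        (auto simp: neighbours_def cayley_adj_one_inv assms(1))
    with assms(2) show False
      by simp
  qed
  with that show ?thesis
    by (auto simp: neighbours_def)
qed

lemma cayley_adj_mult_involution:
  assumes S: "S \<subseteq> carrier G"
    and diam: "diameter_le_two (carrier G) (cayley_adj G S)"
    and quad: "quadrilateral_free (carrier G) (cayley_adj G S)"
    and t: "t \<in> carrier G" "t \<noteq> \<one>" "inv t = t"
    and x: "x \<in> carrier G"
  shows "cayley_adj G S x (x \<otimes> t)"
proof (rule ccontr)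
  let ?A = "cayley_adj G S"
  assume not_adj: "\<not> ?A x (x \<otimes> t)"
  have moves: "c \<otimes> t \<noteq> c" if "c \<in> carrier G" for c
    using that t by simp
  have xt: "x \<otimes> t \<in> carrier G"
    using x t by simp
  obtain c where c: "c \<in> carrier G" "?A x c" "?A c (x \<otimes> t)"
    using diameter_le_twoE[OF diam x xt moves[OF x, symmetric] not_adj] .
  have ct: "c \<otimes> t \<in> carrier G"
    using c t by simp
  have "?A (x \<otimes> t) (c \<otimes> t)"
    by (rule cayley_adj_mult_right) (use S x t c in auto)
  moreover have "?A (c \<otimes> t) (x \<otimes> t \<otimes> t)"
    by (rule cayley_adj_mult_right) (use S x t c in auto)
  moreover have "x \<otimes> t \<otimes> t = x"
    using x t r_inv[of t] by (simp add: m_assoc)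
  ultimately have "c = c \<otimes> t"
    using quadrilateral_freeD[OF quad x c(1) xt ct moves[OF x, symmetric] c(2,3)] by simp
  with moves[OF c(1)] show False
    by simp
qed

lemma odd_degree_cayley_quadrilateral_free_eq_one:
  assumes S: "S \<subseteq> carrier G"
    and loopless: "loopless (carrier G) (cayley_adj G S)"
    and diam: "diameter_le_two (carrier G) (cayley_adj G S)"
    and quad: "quadrilateral_free (carrier G) (cayley_adj G S)"
    and reg: "regular (carrier G) (cayley_adj G S) k" and "odd k"
  shows "k = 1"
proof (rule ccontr)
  let ?A = "cayley_adj G S" and ?N = "neighbours (carrier G) (cayley_adj G S) \<one>"
  assume "k \<noteq> 1"
  have deg: "card ?N = k"
    using reg by (simp add: regular_def)
  obtain t where t: "t \<in> carrier G" "?A \<one> t" "inv t = t"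
    by (rule cayley_odd_degree_involution[OF S]) (use deg \<open>odd k\<close> in simp)
  have "t \<noteq> \<one>"
    using loopless t(2) by (auto simp: loopless_def)
  note mult_t = cayley_adj_mult_involution[OF S diam quad t(1) \<open>t \<noteq> \<one>\<close> t(3)]
  have "k \<ge> 2"
    using \<open>odd k\<close> \<open>k \<noteq> 1\<close> by presburger
  then have "card (?N - {t}) > 0"
    using deg by (simp add: card_Diff_singleton_if)
  then have "?N - {t} \<noteq> {}"
    by (simp add: card_gt_0_iff)
  then obtain y where y: "y \<in> carrier G" "?A \<one> y" "y \<noteq> t"
    by (auto simp: neighbours_def)
  have yt: "y \<otimes> t \<in> carrier G"
    using y t by simp
  have "?A y (y \<otimes> t)"
    using mult_t y by simp
  moreover have "?A (y \<otimes> t) t"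
    using cayley_adj_mult_right[OF S y(1) one_closed t(1) cayley_adj_sym[OF y(2)]] t(1) by simp
  moreover have "?A t \<one>"
    using mult_t[OF one_closed] t(1) by (simp add: cayley_adj_sym)
  moreover have "\<one> \<noteq> y \<otimes> t"
    using y t inv_equality[of y t] by auto
  ultimately have "y = t"
    by (intro quadrilateral_freeD[OF quad one_closed y(1) yt t(1)]) (use y(2) in simp_all)
  with y(3) show False
    by simp
qed

end

section \<open>The Petersen graph\<close>

lemma petersen_V_eq:
  "petersen_V = {{1,2}, {1,3}, {1,4}, {1,5}, {2,3}, {2,4}, {2,5}, {3,4}, {3,5}, {4,5}}"
proof (intro subset_antisym subsetI)
  fix A assume "A \<in> petersen_V"
  then obtain x y where A: "A = {x, y}" "x \<noteq> y" "x \<in> {1..5}" "y \<in> {1..5}"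
    unfolding petersen_V_def card_2_iff by auto
  then have "x = 1 \<or> x = 2 \<or> x = 3 \<or> x = 4 \<or> x = 5" "y = 1 \<or> y = 2 \<or> y = 3 \<or> y = 4 \<or> y = 5"
    by auto
  with A show "A \<in> {{1,2}, {1,3}, {1,4}, {1,5}, {2,3}, {2,4}, {2,5}, {3,4}, {3,5}, {4,5}}"
    by (elim disjE; simp only: insert_iff doubleton_eq_iff; simp)
next
  fix A :: "nat set"
  assume "A \<in> {{1,2}, {1,3}, {1,4}, {1,5}, {2,3}, {2,4}, {2,5}, {3,4}, {3,5}, {4,5}}"
  then show "A \<in> petersen_V"
    by (simp add: petersen_V_def) (elim disjE; simp)
qed

lemma finite_petersen_V: "finite petersen_V"
  by (simp add: petersen_V_eq)

lemma card_petersen_V: "card petersen_V = 10"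
proof -
  have "card petersen_V = card {1..5::nat} choose 2"
    unfolding petersen_V_def by (rule n_subsets) simp
  then show ?thesis
    by (simp add: numeral_eq_Suc)
qed

lemma card_Un_petersen_V:
  assumes "a \<in> petersen_V" "c \<in> petersen_V" "a \<noteq> c"
  shows "3 \<le> card (a \<union> c)"
proof (rule ccontr)
  assume "\<not> 3 \<le> card (a \<union> c)"
  then have "card (a \<union> c) \<le> card a" "card (a \<union> c) \<le> card c"
    using assms(1,2) by (simp_all add: petersen_V_def)
  moreover have "finite (a \<union> c)"
    using assms(1,2) by (auto simp: petersen_V_def intro: finite_subset)
  ultimately have "a = a \<union> c" "c = a \<union> c"
    by (simp_all add: card_seteq)
  with assms(3) show False
    by simp
qed

lemma card_complement_Un_petersen_V:
  assumes "a \<in> petersen_V" "c \<in> petersen_V"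
  shows "card ({1..5::nat} - (a \<union> c)) = 5 - card (a \<union> c)"
  using assms by (subst card_Diff_subset) (auto simp: petersen_V_def intro: finite_subset)

text \<open>Two distinct pairs cover at least three points, so the complement of their union contains
  at most one pair.\<close>

lemma petersen_quadrilateral_free: "quadrilateral_free petersen_V petersen_adj"
  unfolding quadrilateral_free_def
proof (intro ballI impI)
  fix a b c d assume V: "a \<in> petersen_V" "b \<in> petersen_V" "c \<in> petersen_V" "d \<in> petersen_V"
    and "a \<noteq> c" and adj: "petersen_adj a b" "petersen_adj b c" "petersen_adj c d" "petersen_adj d a"
  define X where "X = {1..5::nat} - (a \<union> c)"
  have "card X \<le> 2"
    using card_Un_petersen_V[OF V(1,3) \<open>a \<noteq> c\<close>] card_complement_Un_petersen_V[OF V(1,3)]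
    by (simp add: X_def)
  moreover have "b \<subseteq> X" "d \<subseteq> X"
    using V adj by (auto simp: X_def petersen_V_def petersen_adj_def)
  ultimately have "b = X" "d = X"
    using V(2,4) by (simp_all add: card_seteq X_def petersen_V_def)
  then show "b = d"
    by simp
qed

lemma petersen_diameter_le_two: "diameter_le_two petersen_V petersen_adj"
  unfolding diameter_le_two_def
proof (intro ballI impI)
  fix u w assume V: "u \<in> petersen_V" "w \<in> petersen_V" and "u \<noteq> w" "\<not> petersen_adj u w"
  define X where "X = {1..5::nat} - (u \<union> w)"
  have fin: "finite u" "finite w"
    using V by (auto simp: petersen_V_def intro: finite_subset)
  have "card (u \<inter> w) \<noteq> 0"
    using \<open>\<not> petersen_adj u w\<close> fin by (simp add: petersen_adj_def)
  then have "card (u \<union> w) \<le> 3"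
    using card_Un_Int[OF fin] V by (simp add: petersen_V_def)
  then have "card X = 2"
    using card_Un_petersen_V[OF V \<open>u \<noteq> w\<close>] card_complement_Un_petersen_V[OF V] by (simp add: X_def)
  then have "X \<in> petersen_V"
    by (simp add: petersen_V_def X_def)
  moreover have "petersen_adj u X" "petersen_adj X w"
    by (auto simp: petersen_adj_def X_def)
  ultimately show "\<exists>c\<in>petersen_V. petersen_adj u c \<and> petersen_adj c w"
    by blast
qed

lemma petersen_loopless: "loopless petersen_V petersen_adj"
  by (auto simp: loopless_def petersen_V_def petersen_adj_def)

lemma petersen_regular: "regular petersen_V petersen_adj 3"
  unfolding regular_def
proof
  fix v assume v: "v \<in> petersen_V"
  have "neighbours petersen_V petersen_adj v = {w. w \<subseteq> {1..5} - v \<and> card w = 2}"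
    by (auto simp: neighbours_def petersen_V_def petersen_adj_def)
  also have "card \<dots> = card ({1..5::nat} - v) choose 2"
    by (rule n_subsets) simp
  also have "card ({1..5::nat} - v) = 3"
    using v by (subst card_Diff_subset) (auto simp: petersen_V_def intro: finite_subset)
  finally show "card (neighbours petersen_V petersen_adj v) = 3"
    by (simp add: numeral_eq_Suc)
qed

lemma petersen_not_cayley:
  assumes "group G" "S \<subseteq> carrier G"
  shows "\<not> graph_iso petersen_V petersen_adj (carrier G) (cayley_adj G S)"
proof
  assume iso: "graph_iso petersen_V petersen_adj (carrier G) (cayley_adj G S)"
  have "(3::nat) = 1"
    by (rule group.odd_degree_cayley_quadrilateral_free_eq_one[OF assms])
      (use iso petersen_loopless petersen_diameter_le_two petersen_quadrilateral_free petersen_regular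
        in \<open>auto intro: loopless_graph_iso diameter_le_two_graph_iso quadrilateral_free_graph_iso
          regular_graph_iso\<close>)
  then show False
    by simp
qed

definition affine_maps_mod5 :: "(nat \<Rightarrow> nat) list" where
  "affine_maps_mod5 = [affine_mod 5 a b. a \<leftarrow> [1, 2], b \<leftarrow> [0, 1, 2, 3, 4]]"

definition on_pairs :: "(nat \<Rightarrow> nat) \<Rightarrow> nat set \<Rightarrow> nat set" where
  "on_pairs p A = (if A \<in> petersen_V then p ` A else A)"

lemma affine_maps_mod5_permutes:
  assumes "p \<in> set affine_maps_mod5"
  shows "p permutes {1..5}"
proof -
  from assms obtain a b where "p = affine_mod 5 a b" "a \<in> {1, 2}"
    by (auto simp: affine_maps_mod5_def)
  moreover from \<open>a \<in> {1, 2}\<close> have "coprime a 5"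
    by auto
  ultimately show ?thesis
    by (metis affine_mod_permutes)
qed

lemma length_affine_maps_mod5: "length affine_maps_mod5 = 10"
  by (simp add: affine_maps_mod5_def)

lemma permutes_image_mem_petersen_V:
  assumes "p permutes {1..5}" "A \<in> petersen_V"
  shows "p ` A \<in> petersen_V"
  using assms permutes_inj_on[OF assms(1)] permutes_image[OF assms(1)]
  by (auto simp: petersen_V_def card_image inj_on_subset)

lemma on_pairs_automorphism:
  assumes p: "p permutes {1..5}"
  shows "is_automorphism petersen_V petersen_adj (on_pairs p)"
  unfolding is_automorphism_def
proof
  have inj: "inj p"
    using p by (rule permutes_inj)
  show "on_pairs p permutes petersen_V"
  proof (rule bij_imp_permutes)
    show "bij_betw (on_pairs p) petersen_V petersen_V"
    proof (rule bij_betwI[where g = "on_pairs (inv_into UNIV p)"])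
      show "on_pairs p \<in> petersen_V \<rightarrow> petersen_V" "on_pairs (inv_into UNIV p) \<in> petersen_V \<rightarrow> petersen_V"
        using permutes_image_mem_petersen_V p permutes_inv[OF p] by (auto simp: on_pairs_def)
    next
      fix A assume "A \<in> petersen_V"
      then show "on_pairs (inv_into UNIV p) (on_pairs p A) = A"
        using permutes_image_mem_petersen_V[OF p] inj by (simp add: on_pairs_def image_image)
    next
      fix B assume "B \<in> petersen_V"
      then show "on_pairs p (on_pairs (inv_into UNIV p) B) = B"
        using permutes_image_mem_petersen_V[OF permutes_inv[OF p]] permutes_surj[OF p]
        by (simp add: on_pairs_def image_image surj_f_inv_f)
    qed
  qed (simp add: on_pairs_def)
  show "\<forall>A\<in>petersen_V. \<forall>B\<in>petersen_V. petersen_adj A B \<longleftrightarrow> petersen_adj (on_pairs p A) (on_pairs p B)"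
    by (auto simp: on_pairs_def petersen_adj_def image_Int[OF inj, symmetric])
qed

text \<open>Translations act regularly on the pairs of each difference class \<open>\<plusminus>1\<close>, \<open>\<plusminus>2\<close>, and doubling
  swaps the two classes.\<close>

lemma affine_maps_mod5_orbit:
  assumes u: "u \<in> petersen_V"
  shows "bij_betw (\<lambda>p. p ` u) (set affine_maps_mod5) petersen_V"
proof -
  have "\<forall>u\<in>petersen_V. distinct (map (\<lambda>p. p ` u) affine_maps_mod5)"
    unfolding petersen_V_eq by (simp add: affine_maps_mod5_def affine_mod_def doubleton_eq_iff)
  with u have distinct: "distinct (map (\<lambda>p. p ` u) affine_maps_mod5)"
    by blast
  then have inj: "inj_on (\<lambda>p. p ` u) (set affine_maps_mod5)"
    by (simp add: distinct_map)
  have card: "card ((\<lambda>p. p ` u) ` set affine_maps_mod5) = card petersen_V"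
    using distinct_card[OF distinct] length_affine_maps_mod5 card_petersen_V by simp
  have "(\<lambda>p. p ` u) ` set affine_maps_mod5 \<subseteq> petersen_V"
    using permutes_image_mem_petersen_V[OF affine_maps_mod5_permutes u] by blast
  with card have "(\<lambda>p. p ` u) ` set affine_maps_mod5 = petersen_V"
    by (intro card_subset_eq finite_petersen_V)
  with inj show ?thesis
    by (rule bij_betw_imageI)
qed

lemma petersen_uniformly_vertex_transitive:
  "uniformly_vertex_transitive petersen_V petersen_adj"
proof (rule uniformly_vertex_transitiveI[where \<Sigma> = "on_pairs ` set affine_maps_mod5"])
  have "{1, 2} \<in> petersen_V"
    by (simp add: petersen_V_def)
  have "inj_on on_pairs (set affine_maps_mod5)"
  proof (rule inj_onI)
    fix p q assume "p \<in> set affine_maps_mod5" "q \<in> set affine_maps_mod5" "on_pairs p = on_pairs q"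
    with \<open>{1, 2} \<in> petersen_V\<close> show "p = q"
      using bij_betw_imp_inj_on[OF affine_maps_mod5_orbit] by (metis on_pairs_def inj_onD)
  qed
  then have on_pairs: "bij_betw on_pairs (set affine_maps_mod5) (on_pairs ` set affine_maps_mod5)"
    by (rule bij_betw_imageI) simp
  fix u assume "u \<in> petersen_V"
  then have "bij_betw ((\<lambda>\<sigma>. \<sigma> u) \<circ> on_pairs) (set affine_maps_mod5) petersen_V"
    using affine_maps_mod5_orbit by (simp add: comp_def on_pairs_def)
  then show "bij_betw (\<lambda>\<sigma>. \<sigma> u) (on_pairs ` set affine_maps_mod5) petersen_V"
    by (simp add: bij_betw_comp_iff[OF on_pairs])
next
  show "finite petersen_V" "petersen_V \<noteq> {}"
    by (simp_all add: finite_petersen_V petersen_V_eq)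
qed (auto intro: on_pairs_automorphism affine_maps_mod5_permutes)

theorem mainTheorem3:
  shows "uniformly_vertex_transitive petersen_V petersen_adj \<and>
    \<not> (\<exists>(G :: 'g monoid) S. group G \<and> finite (carrier G) \<and> S \<subseteq> carrier G \<and>
          graph_iso petersen_V petersen_adj (carrier G) (cayley_adj G S))"
  using petersen_uniformly_vertex_transitive petersen_not_cayley by blast

end
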